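(* Let $q$ be odd and let $C$ be an $[n,k]$ code over $\mathbb{F}_q$ with $C^\perp\neq\{\bm 0\}$ and $d(C^\perp)>3$. Then $\gamma(C)\le k-d(C^\perp)+2$.
   Context: An $[n,k]$ code over $\mathbb{F}_q$ is a $k$-dimensional subspace $C\subseteq\mathbb{F}_q^n$; write $E=\{1,\dots,n\}$. For $\bm{x}\in\mathbb{F}_q^n$, $\mathrm{supp}(\bm{x})=\{i: x_i\neq 0\}$ and the weight is $|\mathrm{supp}(\bm{x})|$; for $B\subseteq\mathbb{F}_q^n$, $\mathrm{Supp}(B)=\bigcup_{\bm{x}\in B}\mathrm{supp}(\bm{x})$. $C^\perp$ is the dual code with respect to the standard inner product and $d(C^\perp)$ is the minimum weight of a nonzero codeword of $C^\perp$. The covering dimension is $\gamma(C)=\infty$ if $\mathrm{Supp}(C)\neq E$, and otherwise $\gamma(C)$ is the least positive integer $r$ such that $C$ has an $r$-dimensional subspace $D$ with $\mathrm{Supp}(D)=E$. *)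

theory Defs
  imports "HOL-Analysis.Analysis" "HOL-Library.Extended_Nat"
begin

text \<open>Codes of length n over a finite field 'a are subspaces of 'a^'n, where the
  finite index type 'n plays the role of E = {1..n} (so n = CARD('n)).\<close>

definition supp :: "('a::zero)^'n \<Rightarrow> 'n set" where
  "supp x = {i. x $ i \<noteq> 0}"

definition weight :: "('a::zero)^'n \<Rightarrow> nat" where
  "weight x = card (supp x)"

definition Supp :: "(('a::zero)^'n) set \<Rightarrow> 'n set" where
  "Supp B = (\<Union>x\<in>B. supp x)"

definition dual_code :: "(('a::field)^'n) set \<Rightarrow> ('a^'n) set" where
  "dual_code C = {y. \<forall>x\<in>C. (\<Sum>i\<in>UNIV. x $ i * y $ i) = 0}"

definition min_dist :: "(('a::field)^'n) set \<Rightarrow> nat" where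
  "min_dist C = Min (weight ` (C - {0}))"

definition covering_dim :: "(('a::field)^'n::finite) set \<Rightarrow> enat" where
  "covering_dim C =
     (if Supp C \<noteq> UNIV then \<infinity>
      else enat (LEAST r. 0 < r \<and>
             (\<exists>D. vec.subspace D \<and> D \<subseteq> C \<and> vec.dim D = r \<and> Supp D = UNIV)))"

end

theory Submission
  imports Defs
begin

text \<open>Let \<open>d = d(C\<^sup>\<bottom>)\<close> and fix a set \<open>T\<close> of \<open>d - 1\<close> coordinates. No nonzero dual codeword is
  supported on fewer than \<open>d\<close> coordinates, so the restriction \<open>C \<rightarrow> \<bbbF>\<^sub>q\<^sup>T\<close> is onto and the
  codewords vanishing on \<open>T\<close> form a subspace of dimension \<open>k - d + 1\<close>. For \<open>c \<in> \<bbbF>\<^sub>q\<^sup>T\<close> without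
  zero entries, the codewords whose restriction to \<open>T\<close> is a multiple of \<open>c\<close> therefore form a
  subcode of dimension at most \<open>k - d + 2\<close>. It misses a coordinate \<open>i \<notin> T\<close> only if some
  nonzero dual codeword \<open>y\<close> supported on \<open>T \<union> {i}\<close> satisfies \<open>\<Sum>t\<in>T. c(t) y(t) = 0\<close>. Such dual
  codewords are nonzero on all of \<open>T\<close> and, for fixed \<open>t\<^sub>1 \<noteq> t\<^sub>2\<close> in \<open>T\<close>, determined up to scaling
  by the ratio \<open>y(t\<^sub>2) / y(t\<^sub>1)\<close>. So there are at most \<open>q - 1\<close> of them up to scaling, and for
  \<open>q \<ge> 3\<close> a counting argument produces a \<open>c\<close> avoiding all of them.\<close>

lemma finite_weight_image: "finite (weight ` (B :: ('a::zero^'n::finite) set))"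
  by (rule finite_subset[of _ "{..CARD('n)}"]) (auto simp: weight_def card_mono)

lemma weight_le_card: "supp y \<subseteq> S \<Longrightarrow> weight y \<le> card S"
  unfolding weight_def by (simp add: card_mono)

lemma min_dist_le_weight: "y \<in> B \<Longrightarrow> y \<noteq> 0 \<Longrightarrow> min_dist B \<le> weight y"
  unfolding min_dist_def by (simp add: finite_weight_image)

lemma dual_code_subspace: "vec.subspace (dual_code C)"
  unfolding vec.subspace_def dual_code_def
  by (auto simp: sum.distrib algebra_simps simp flip: sum_distrib_left)

lemma exists_orthogonal_not_orthogonal:
  fixes V :: "('a::field^'n::finite) set"
  assumes V: "vec.subspace V" and v: "v \<notin> V"
  shows "\<exists>y. (\<forall>x\<in>V. (\<Sum>i\<in>UNIV. x $ i * y $ i) = 0) \<and> (\<Sum>i\<in>UNIV. v $ i * y $ i) \<noteq> 0"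
proof -
  obtain B where B: "B \<subseteq> V" "vec.independent B" "V \<subseteq> vec.span B"
    using vec.basis_exists[of V] by metis
  have span_B: "vec.span B = V" using vec.span_subspace[OF B(1) B(3) V] .
  then have indep: "vec.independent (insert v B)"
    using B(2) v vec.independent_insert by metis
  then obtain g :: "'a^'n \<Rightarrow> 'a^'n" where g: "Vector_Spaces.linear (*s) (*s) g"
    "\<forall>x\<in>insert v B. g x = (if x = v then 1 else 0)"
    using vec.linear_independent_extend[OF indep, of "\<lambda>x. if x = v then 1 else 0"] by blast
  interpret g: Vector_Spaces.linear "(*s)" "(*s)" g by (rule g(1))
  define y where "y = (\<chi> i. g (axis i 1) $ (undefined :: 'n))"
  have g_component: "g x $ undefined = (\<Sum>i\<in>UNIV. x $ i * y $ i)" for x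
    unfolding y_def vec_lambda_beta by (rule linear_componentwise[OF g(1)])
  have "g b = 0" if "b \<in> B" for b
    using g(2) that B(1) v by auto
  then have "g x = 0" if "x \<in> V" for x
    using g.eq_0_on_span[of B x] that span_B by blast
  then have "\<forall>x\<in>V. (\<Sum>i\<in>UNIV. x $ i * y $ i) = 0" by (simp flip: g_component)
  moreover have "(\<Sum>i\<in>UNIV. v $ i * y $ i) = 1" using g(2) by (simp flip: g_component)
  ultimately show ?thesis by (intro exI[of _ y]) simp
qed

definition agree_on_code :: "('a::zero^'n) set \<Rightarrow> 'n set \<Rightarrow> ('a^'n) set" where
  "agree_on_code C S = {z. \<exists>w\<in>C. \<forall>i\<in>S. z $ i = w $ i}"

lemma subspace_agree_on_code:
  assumes "vec.subspace C" shows "vec.subspace (agree_on_code C S)"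
  unfolding vec.subspace_def agree_on_code_def
proof (intro conjI allI ballI)
  show "0 \<in> {z. \<exists>w\<in>C. \<forall>i\<in>S. z $ i = w $ i}" using assms vec.subspace_0 by fastforce
next
  fix c x assume "x \<in> {z. \<exists>w\<in>C. \<forall>i\<in>S. z $ i = w $ i}"
  then obtain w where "w \<in> C" "\<forall>i\<in>S. x $ i = w $ i" by blast
  then show "c *s x \<in> {z. \<exists>w\<in>C. \<forall>i\<in>S. z $ i = w $ i}"
    using assms vec.subspace_scale by (intro CollectI bexI[of _ "c *s w"]) auto
next
  fix x y assume "x \<in> {z. \<exists>w\<in>C. \<forall>i\<in>S. z $ i = w $ i}" "y \<in> {z. \<exists>w\<in>C. \<forall>i\<in>S. z $ i = w $ i}"
  then obtain w w' where "w \<in> C" "\<forall>i\<in>S. x $ i = w $ i" "w' \<in> C" "\<forall>i\<in>S. y $ i = w' $ i"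
    by blast
  then show "x + y \<in> {z. \<exists>w\<in>C. \<forall>i\<in>S. z $ i = w $ i}"
    using assms vec.subspace_add by (intro CollectI bexI[of _ "w + w'"]) auto
qed

lemma exists_dual_supported_in:
  assumes C: "vec.subspace C" and z: "z \<notin> agree_on_code C S"
  shows "\<exists>y\<in>dual_code C. y \<noteq> 0 \<and> supp y \<subseteq> S"
proof -
  obtain y where y: "\<forall>x\<in>agree_on_code C S. (\<Sum>i\<in>UNIV. x $ i * y $ i) = 0"
    "(\<Sum>i\<in>UNIV. z $ i * y $ i) \<noteq> 0"
    using exists_orthogonal_not_orthogonal[OF subspace_agree_on_code[OF C] z] by blast
  have "y \<in> dual_code C" using y(1) by (auto simp: dual_code_def agree_on_code_def)
  moreover have "y $ l = 0" if "l \<notin> S" for l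
  proof -
    have "axis l 1 \<in> agree_on_code C S"
      using that vec.subspace_0[OF C] by (auto simp: agree_on_code_def axis_def intro!: bexI[of _ 0])
    then have "(\<Sum>i\<in>UNIV. axis l 1 $ i * y $ i) = 0" using y(1) by blast
    moreover have "(\<Sum>i\<in>UNIV. axis l 1 $ i * y $ i) = y $ l"
      by (simp add: axis_def if_distrib[of "\<lambda>a. a * _"] cong: if_cong)
    ultimately show ?thesis by simp
  qed
  moreover have "y \<noteq> 0" using y(2) by auto
  ultimately show ?thesis by (auto simp: supp_def)
qed

lemma card_image_le_if_factors:
  assumes "finite (g ` A)" and "\<And>x y. x \<in> A \<Longrightarrow> y \<in> A \<Longrightarrow> g x = g y \<Longrightarrow> f x = f y"
  shows "card (f ` A) \<le> card (g ` A)"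
proof -
  have "f x = f (inv_into A g (g x))" if "x \<in> A" for x
  proof -
    have gx: "g x \<in> g ` A" using that by (rule imageI)
    show ?thesis
      by (rule assms(2)[OF that inv_into_into[OF gx]]) (simp add: f_inv_into_f[OF gx])
  qed
  then have "f ` A = (\<lambda>v. f (inv_into A g v)) ` g ` A"
    unfolding image_image by (rule image_cong[OF refl])
  then show ?thesis using card_image_le[OF assms(1)] by simp
qed

lemma exists_ne_0_1:
  assumes "2 < CARD('a::{finite,field})"
  shows "\<exists>a::'a. a \<noteq> 0 \<and> a \<noteq> 1"
proof -
  have "card {0::'a, 1} < CARD('a)" using assms by simp
  then have "{0::'a, 1} \<noteq> UNIV" by (metis less_irrefl)
  then show ?thesis by blast
qed

lemma exists_nonvanishing_coeffs:
  fixes v :: "'b \<Rightarrow> 'a::{finite,field}"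
  assumes "2 < CARD('a)" and "finite R" and "t \<in> R" and "v t \<noteq> 0"
  shows "\<exists>\<kappa>. (\<forall>s. \<kappa> s \<noteq> 0) \<and> (\<Sum>s\<in>R. \<kappa> s * v s) \<noteq> 0"
proof -
  obtain a :: 'a where a: "a \<noteq> 0" "a \<noteq> 1" using exists_ne_0_1[OF assms(1)] by blast
  define \<kappa> where "\<kappa> s = (if s = t then a else 1)" for s
  have "(\<Sum>s\<in>R. \<kappa> s * v s) - (\<Sum>s\<in>R. v s) = (\<Sum>s\<in>R. (\<kappa> s - 1) * v s)"
    by (simp add: sum_subtractf[symmetric] algebra_simps)
  also have "\<dots> = (\<Sum>s\<in>R. if s = t then (a - 1) * v s else 0)"
    by (rule sum.cong) (auto simp: \<kappa>_def)
  also have "\<dots> = (a - 1) * v t" using assms(2,3) by simp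
  finally have diff: "(\<Sum>s\<in>R. \<kappa> s * v s) - (\<Sum>s\<in>R. v s) = (a - 1) * v t" .
  show ?thesis
  proof (cases "(\<Sum>s\<in>R. v s) = 0")
    case True
    then have "(\<Sum>s\<in>R. \<kappa> s * v s) \<noteq> 0" using diff a assms(4) by simp
    moreover have "\<forall>s. \<kappa> s \<noteq> 0" using a by (simp add: \<kappa>_def)
    ultimately show ?thesis by blast
  next
    case False
    then show ?thesis by (intro exI[of _ "\<lambda>_. 1"]) simp
  qed
qed

text \<open>With \<open>z\<close> fixed so that the form of \<open>y\<^sub>0\<close> vanishes at \<open>x = 0\<close>, the root \<open>x\<close> of the
  form of \<open>y\<close> depends only on the ratio \<open>p\<^sub>2 y / p\<^sub>1 y\<close>, which takes at most \<open>q - 1\<close> values;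
  so the roots cannot exhaust all \<open>q\<close> field elements.\<close>
lemma exists_units_avoiding_affine_forms:
  fixes p\<^sub>1 p\<^sub>2 A :: "'b \<Rightarrow> 'a::{finite,field}"
  assumes p\<^sub>1: "\<And>y. y \<in> Y \<Longrightarrow> p\<^sub>1 y \<noteq> 0" and p\<^sub>2: "\<And>y. y \<in> Y \<Longrightarrow> p\<^sub>2 y \<noteq> 0"
    and A: "\<And>y y'. y \<in> Y \<Longrightarrow> y' \<in> Y \<Longrightarrow> p\<^sub>2 y / p\<^sub>1 y = p\<^sub>2 y' / p\<^sub>1 y' \<Longrightarrow>
              A y / p\<^sub>1 y = A y' / p\<^sub>1 y'"
    and y\<^sub>0: "y\<^sub>0 \<in> Y" "A y\<^sub>0 \<noteq> 0"
  shows "\<exists>x z. x \<noteq> 0 \<and> z \<noteq> 0 \<and> (\<forall>y\<in>Y. x * p\<^sub>1 y + z * p\<^sub>2 y + A y \<noteq> 0)"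
proof (rule ccontr)
  assume no_pair: "\<not> ?thesis"
  define z where "z = - A y\<^sub>0 / p\<^sub>2 y\<^sub>0"
  have "z \<noteq> 0" using y\<^sub>0 p\<^sub>2 by (simp add: z_def)
  define ratio where "ratio y = p\<^sub>2 y / p\<^sub>1 y" for y
  define root where "root y = - (z * p\<^sub>2 y + A y) / p\<^sub>1 y" for y
  have "x \<in> root ` Y" for x
  proof (cases "x = 0")
    case True
    have "root y\<^sub>0 = 0" using y\<^sub>0 p\<^sub>2 by (simp add: root_def z_def)
    then show ?thesis using True y\<^sub>0 by force
  next
    case False
    then obtain y where "y \<in> Y" "x * p\<^sub>1 y + z * p\<^sub>2 y + A y = 0"
      using no_pair \<open>z \<noteq> 0\<close> by blast
    moreover from this have "x = root y"
      using p\<^sub>1 by (simp add: root_def field_simps add_eq_0_iff2)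
    ultimately show ?thesis by blast
  qed
  then have "root ` Y = UNIV" by blast
  then have "CARD('a) \<le> card (root ` Y)" by simp
  also have "\<dots> \<le> card (ratio ` Y)"
  proof (rule card_image_le_if_factors)
    show "root y = root y'" if "y \<in> Y" "y' \<in> Y" "ratio y = ratio y'" for y y'
    proof -
      have "root y = - (z * ratio y + A y / p\<^sub>1 y)" using p\<^sub>1 that(1) 
        by (simp add: root_def ratio_def field_simps)
      also have "\<dots> = - (z * ratio y' + A y' / p\<^sub>1 y')"
        using A[OF that(1,2)] that(3) by (simp add: ratio_def)
      also have "\<dots> = root y'" using p\<^sub>1 that(2) by (simp add: root_def ratio_def field_simps)
      finally show ?thesis .
    qed
  qed simp
  also have "\<dots> \<le> card (UNIV - {0 :: 'a})"
    using p\<^sub>1 p\<^sub>2 by (intro card_mono) (auto simp: ratio_def)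
  also have "\<dots> < CARD('a)" by (simp add: card_Diff_singleton)
  finally show False by simp
qed

lemma exists_coeffs_avoiding_linear_forms:
  fixes Y :: "('a::{finite,field}^'n::finite) set"
  assumes q: "2 < CARD('a)"
    and t: "t\<^sub>1 \<in> T" "t\<^sub>2 \<in> T" "t\<^sub>3 \<in> T" "t\<^sub>1 \<noteq> t\<^sub>2" "t\<^sub>1 \<noteq> t\<^sub>3" "t\<^sub>2 \<noteq> t\<^sub>3"
    and nonzero: "\<And>y t. y \<in> Y \<Longrightarrow> t \<in> T \<Longrightarrow> y $ t \<noteq> 0"
    and proportional: "\<And>y y'. y \<in> Y \<Longrightarrow> y' \<in> Y \<Longrightarrow> y $ t\<^sub>2 / y $ t\<^sub>1 = y' $ t\<^sub>2 / y' $ t\<^sub>1 \<Longrightarrow>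
                         y = (y $ t\<^sub>1 / y' $ t\<^sub>1) *s y'"
  shows "\<exists>c. (\<forall>t\<in>T. c $ t \<noteq> 0) \<and> (\<forall>y\<in>Y. (\<Sum>t\<in>T. c $ t * y $ t) \<noteq> 0)"
proof (cases "Y = {}")
  case True
  then show ?thesis by (intro exI[of _ "\<chi> i. 1"]) simp
next
  case False
  then obtain y\<^sub>1 where y\<^sub>1: "y\<^sub>1 \<in> Y" by blast
  define R where "R = T - {t\<^sub>1, t\<^sub>2}"
  have R: "finite R" "t\<^sub>3 \<in> R" "t\<^sub>1 \<notin> insert t\<^sub>2 R" "t\<^sub>2 \<notin> R" and T_eq: "T = insert t\<^sub>1 (insert t\<^sub>2 R)"
    using t by (auto simp: R_def)
  obtain \<kappa> where \<kappa>: "\<forall>s. \<kappa> s \<noteq> 0" "(\<Sum>s\<in>R. \<kappa> s * y\<^sub>1 $ s) \<noteq> 0"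
    using exists_nonvanishing_coeffs[OF q R(1,2), of "\<lambda>s. y\<^sub>1 $ s"] nonzero[OF y\<^sub>1 t(3)] by blast
  define A where "A y = (\<Sum>s\<in>R. \<kappa> s * y $ s)" for y :: "'a^'n"
  have A_scaled: "A y / y $ t\<^sub>1 = A y' / y' $ t\<^sub>1"
    if "y \<in> Y" "y' \<in> Y" "y $ t\<^sub>2 / y $ t\<^sub>1 = y' $ t\<^sub>2 / y' $ t\<^sub>1" for y y'
  proof -
    define l where "l = y $ t\<^sub>1 / y' $ t\<^sub>1"
    have "y = l *s y'" using proportional[OF that] by (simp add: l_def)
    then have "A y = l * A y'" "y $ t\<^sub>1 = l * y' $ t\<^sub>1"
      by (simp_all add: A_def sum_distrib_left algebra_simps)
    moreover have "l \<noteq> 0" using nonzero that(1,2) t(1) by (simp add: l_def)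
    ultimately show ?thesis by simp
  qed
  obtain x z where xz: "x \<noteq> 0" "z \<noteq> 0" "\<forall>y\<in>Y. x * y $ t\<^sub>1 + z * y $ t\<^sub>2 + A y \<noteq> 0"
    using exists_units_avoiding_affine_forms[of Y "\<lambda>y. y $ t\<^sub>1" "\<lambda>y. y $ t\<^sub>2" A y\<^sub>1,
        OF nonzero[OF _ t(1)] nonzero[OF _ t(2)] A_scaled y\<^sub>1] \<kappa>(2)
    unfolding A_def by blast
  define c where "c = (\<chi> i. if i = t\<^sub>1 then x else if i = t\<^sub>2 then z else \<kappa> i)"
  have "(\<Sum>t\<in>T. c $ t * y $ t) = x * y $ t\<^sub>1 + z * y $ t\<^sub>2 + A y" for y
  proof -
    have "(\<Sum>t\<in>R. c $ t * y $ t) = A y"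
      unfolding A_def by (rule sum.cong) (use R in \<open>auto simp: c_def\<close>)
    then show ?thesis using R t(4) by (simp add: T_eq c_def add.assoc)
  qed
  moreover have "\<forall>t\<in>T. c $ t \<noteq> 0" using xz(1,2) \<kappa>(1) by (simp add: c_def)
  ultimately show ?thesis using xz(3) by (intro exI[of _ c]) simp
qed

definition dual_words_near :: "('a::field^'n) set \<Rightarrow> 'n set \<Rightarrow> ('a^'n) set" where
  "dual_words_near C T = {y \<in> dual_code C - {0}. \<exists>j. supp y \<subseteq> insert j T}"

definition subcode_along :: "('a::field^'n) set \<Rightarrow> 'n set \<Rightarrow> 'a^'n \<Rightarrow> ('a^'n) set" where
  "subcode_along C T c = {w \<in> C. \<exists>l. \<forall>t\<in>T. w $ t = l * c $ t}"

lemma subspace_subcode_along: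
  assumes "vec.subspace C" shows "vec.subspace (subcode_along C T c)"
  unfolding vec.subspace_def subcode_along_def
proof (intro conjI allI ballI)
  show "0 \<in> {w \<in> C. \<exists>l. \<forall>t\<in>T. w $ t = l * c $ t}"
    using vec.subspace_0[OF assms] by (auto intro!: exI[of _ 0])
next
  fix x y assume "x \<in> {w \<in> C. \<exists>l. \<forall>t\<in>T. w $ t = l * c $ t}" "y \<in> {w \<in> C. \<exists>l. \<forall>t\<in>T. w $ t = l * c $ t}"
  then obtain l l' where "x \<in> C" "\<forall>t\<in>T. x $ t = l * c $ t" "y \<in> C" "\<forall>t\<in>T. y $ t = l' * c $ t"
    by blast
  then show "x + y \<in> {w \<in> C. \<exists>l. \<forall>t\<in>T. w $ t = l * c $ t}"
    using vec.subspace_add[OF assms] by (auto intro!: exI[of _ "l + l'"] simp: algebra_simps)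
next
  fix r :: 'a and x assume "x \<in> {w \<in> C. \<exists>l. \<forall>t\<in>T. w $ t = l * c $ t}"
  then obtain l where "x \<in> C" "\<forall>t\<in>T. x $ t = l * c $ t" by blast
  then show "r *s x \<in> {w \<in> C. \<exists>l. \<forall>t\<in>T. w $ t = l * c $ t}"
    using vec.subspace_scale[OF assms] by (auto intro!: exI[of _ "r * l"] simp: algebra_simps)
qed

locale dual_distance =
  fixes C :: "('a::field^'n::finite) set" and d :: nat
  assumes subspace: "vec.subspace C"
    and dual_weight_ge: "\<And>y. y \<in> dual_code C \<Longrightarrow> y \<noteq> 0 \<Longrightarrow> d \<le> weight y"
begin

lemma dual_supported_eq_0:
  assumes "y \<in> dual_code C" "supp y \<subseteq> S" "card S < d" shows "y = 0"
  using dual_weight_ge[OF assms(1)] weight_le_card[OF assms(2)] assms(3) by fastforce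

lemma agree_on_code_eq_UNIV:
  assumes "card S < d" shows "agree_on_code C S = UNIV"
  using exists_dual_supported_in[OF subspace] dual_supported_eq_0 assms by blast

end

locale dual_distance_small_set = dual_distance C d
    for C :: "('a::field^'n::finite) set" and d +
  fixes T :: "'n set"
  assumes card_T_less: "card T < d"
begin

lemma exists_codeword_extending: "\<exists>w\<in>C. \<forall>t\<in>T. w $ t = z $ t"
proof -
  have "z \<in> agree_on_code C T" using agree_on_code_eq_UNIV[OF card_T_less] by simp
  then show ?thesis by (auto simp: agree_on_code_def)
qed

lemma dual_words_near_nonzero:
  assumes "y \<in> dual_words_near C T" "t \<in> T" shows "y $ t \<noteq> 0"
proof
  assume "y $ t = 0"
  obtain j where y: "y \<in> dual_code C" "y \<noteq> 0" "supp y \<subseteq> insert j T"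
    using assms(1) by (auto simp: dual_words_near_def)
  with \<open>y $ t = 0\<close> have "supp y \<subseteq> insert j T - {t}" by (auto simp: supp_def)
  moreover have "card (insert j T - {t}) < d"
    using assms(2) card_T_less by (cases "j \<in> T") (simp_all add: card_insert_if)
  ultimately show False using dual_supported_eq_0 y(1,2) by blast
qed

lemma dual_words_near_proportional:
  assumes y: "y \<in> dual_words_near C T" and y': "y' \<in> dual_words_near C T"
    and t: "t\<^sub>1 \<in> T" "t\<^sub>2 \<in> T" "t\<^sub>1 \<noteq> t\<^sub>2"
    and ratio: "y $ t\<^sub>2 / y $ t\<^sub>1 = y' $ t\<^sub>2 / y' $ t\<^sub>1"
  shows "y = (y $ t\<^sub>1 / y' $ t\<^sub>1) *s y'"
proof -
  obtain j j' where "y \<in> dual_code C" "supp y \<subseteq> insert j T"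
    "y' \<in> dual_code C" "supp y' \<subseteq> insert j' T"
    using y y' by (auto simp: dual_words_near_def)
  define w where "w = y - (y $ t\<^sub>1 / y' $ t\<^sub>1) *s y'"
  have nonzero: "y $ t\<^sub>1 \<noteq> 0" "y' $ t\<^sub>1 \<noteq> 0"
    using dual_words_near_nonzero y y' t by auto
  have "w \<in> dual_code C" unfolding w_def
    using \<open>y \<in> dual_code C\<close> \<open>y' \<in> dual_code C\<close>
    by (intro vec.subspace_diff[OF dual_code_subspace] vec.subspace_scale[OF dual_code_subspace])
  moreover have "w $ t\<^sub>1 = 0" "w $ t\<^sub>2 = 0"
    using ratio nonzero by (simp_all add: w_def field_simps)
  then have "w $ i = 0" if "i \<notin> insert j (insert j' (T - {t\<^sub>1, t\<^sub>2}))" for i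
  proof (cases "i \<in> {t\<^sub>1, t\<^sub>2}")
    case False
    with that have "y $ i = 0" "y' $ i = 0"
      using \<open>supp y \<subseteq> insert j T\<close> \<open>supp y' \<subseteq> insert j' T\<close> by (auto simp: supp_def)
    then show ?thesis by (simp add: w_def)
  qed auto
  then have "supp w \<subseteq> insert j (insert j' (T - {t\<^sub>1, t\<^sub>2}))" by (auto simp: supp_def)
  moreover have "card (insert j (insert j' (T - {t\<^sub>1, t\<^sub>2}))) < d"
  proof -
    have "card {t\<^sub>1, t\<^sub>2} \<le> card T" using t by (intro card_mono) auto
    then have "card (T - {t\<^sub>1, t\<^sub>2}) + 2 = card T" using t by (simp add: card_Diff_subset)
    moreover have "card (insert j (insert j' (T - {t\<^sub>1, t\<^sub>2}))) \<le> card (T - {t\<^sub>1, t\<^sub>2}) + 2"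
      by (simp add: card_insert_if)
    ultimately show ?thesis using card_T_less by linarith
  qed
  ultimately have "w = 0" by (rule dual_supported_eq_0)
  then show ?thesis by (simp add: w_def)
qed

lemma dim_vanishing_on_T: "vec.dim {w \<in> C. \<forall>t\<in>T. w $ t = 0} + card T = vec.dim C"
proof -
  define Z where "Z = {x :: 'a^'n. \<forall>i. i \<notin> - T \<longrightarrow> x $ i = 0}"
  have Z: "vec.subspace Z" unfolding Z_def vec.subspace_def by auto
  have "z \<in> {x + y |x y. x \<in> C \<and> y \<in> Z}" for z
  proof -
    obtain w where "w \<in> C" "\<forall>t\<in>T. w $ t = z $ t" using exists_codeword_extending by blast
    then have "w \<in> C" "z - w \<in> Z" by (auto simp: Z_def)
    then show ?thesis by force
  qed
  then have "{x + y |x y. x \<in> C \<and> y \<in> Z} = UNIV" by blast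
  then have "vec.dim (UNIV :: ('a^'n) set) + vec.dim (C \<inter> Z) = vec.dim C + vec.dim Z"
    using vec.dim_sums_Int[OF subspace Z] by simp
  moreover have "C \<inter> Z = {w \<in> C. \<forall>t\<in>T. w $ t = 0}" by (auto simp: Z_def)
  moreover have "vec.dim Z = CARD('n) - card T"
    unfolding Z_def dim_substandard_cart by (simp add: Compl_eq_Diff_UNIV card_Diff_subset)
  moreover have "card T \<le> CARD('n)" by (rule card_mono) simp_all
  ultimately show ?thesis by (simp add: card_cart_basis)
qed

lemma dim_subcode_along: "vec.dim (subcode_along C T c) + card T \<le> vec.dim C + 1"
proof -
  define K where "K = {w \<in> C. \<forall>t\<in>T. w $ t = 0}"
  obtain w\<^sub>0 where w\<^sub>0: "w\<^sub>0 \<in> C" "\<forall>t\<in>T. w\<^sub>0 $ t = c $ t" using exists_codeword_extending by blast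
  have "subcode_along C T c \<subseteq> vec.span (insert w\<^sub>0 K)"
  proof
    fix w assume "w \<in> subcode_along C T c"
    then obtain l where w: "w \<in> C" "\<forall>t\<in>T. w $ t = l * c $ t" by (auto simp: subcode_along_def)
    have "w - l *s w\<^sub>0 \<in> K"
      using w w\<^sub>0 vec.subspace_diff[OF subspace w(1) vec.subspace_scale[OF subspace w\<^sub>0(1)]]
      by (auto simp: K_def)
    then have "(w - l *s w\<^sub>0) + l *s w\<^sub>0 \<in> vec.span (insert w\<^sub>0 K)"
      by (intro vec.span_add vec.span_scale) (simp_all add: vec.span_base)
    then show "w \<in> vec.span (insert w\<^sub>0 K)" by simp
  qed
  then have "vec.dim (subcode_along C T c) \<le> vec.dim (insert w\<^sub>0 K)" by (rule vec.dim_mono)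
  also have "\<dots> \<le> vec.dim K + 1" by (simp add: vec.dim_insert)
  finally show ?thesis using dim_vanishing_on_T unfolding K_def by linarith
qed

lemma Supp_subcode_along:
  assumes c_nonzero: "\<forall>t\<in>T. c $ t \<noteq> 0"
    and c_avoids: "\<forall>y\<in>dual_words_near C T. (\<Sum>t\<in>T. c $ t * y $ t) \<noteq> 0"
  shows "Supp (subcode_along C T c) = UNIV"
proof -
  obtain w\<^sub>0 where w\<^sub>0: "w\<^sub>0 \<in> C" "\<forall>t\<in>T. w\<^sub>0 $ t = c $ t" using exists_codeword_extending by blast
  then have w\<^sub>0_in: "w\<^sub>0 \<in> subcode_along C T c" by (auto simp: subcode_along_def intro!: exI[of _ 1])
  have "\<exists>w\<in>subcode_along C T c. w $ i \<noteq> 0" for i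
  proof (cases "i \<in> T")
    case True
    then show ?thesis using w\<^sub>0(2) c_nonzero by (intro bexI[OF _ w\<^sub>0_in]) simp
  next
    case False
    show ?thesis
    proof (rule ccontr)
      assume vanish: "\<not> ?thesis"
      define z where "z = (\<chi> l. if l = i then 1 else c $ l)"
      have "z \<notin> agree_on_code C (insert i T)"
      proof
        assume "z \<in> agree_on_code C (insert i T)"
        then obtain w where w: "w \<in> C" "\<forall>l\<in>insert i T. z $ l = w $ l"
          by (auto simp: agree_on_code_def)
        have "\<forall>t\<in>T. w $ t = 1 * c $ t"
        proof
          fix t assume "t \<in> T"
          then show "w $ t = 1 * c $ t" using w(2) False by (auto simp: z_def split: if_splits)
        qed
        then have "w \<in> subcode_along C T c" using w(1) unfolding subcode_along_def by blast
        moreover have "w $ i = 1" using w by (simp add: z_def)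
        ultimately show False using vanish by auto
      qed
      then obtain y where y: "y \<in> dual_code C" "y \<noteq> 0" "supp y \<subseteq> insert i T"
        using exists_dual_supported_in[OF subspace] by blast
      have "0 = (\<Sum>l\<in>UNIV. w\<^sub>0 $ l * y $ l)" using y(1) w\<^sub>0(1) by (simp add: dual_code_def)
      also have "\<dots> = (\<Sum>l\<in>insert i T. w\<^sub>0 $ l * y $ l)"
        using y(3) by (intro sum.mono_neutral_right) (auto simp: supp_def)
      also have "\<dots> = (\<Sum>t\<in>T. c $ t * y $ t)"
        using False vanish w\<^sub>0_in w\<^sub>0(2) by simp
      finally have "(\<Sum>t\<in>T. c $ t * y $ t) = 0" ..
      moreover have "y \<in> dual_words_near C T" using y by (auto simp: dual_words_near_def)
      ultimately show False using c_avoids by blast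
    qed
  qed
  then show ?thesis by (auto simp: Supp_def supp_def)
qed

lemma subcode_along_dim_pos:
  assumes "t \<in> T" and "c $ t \<noteq> 0" shows "0 < vec.dim (subcode_along C T c)"
proof -
  obtain w\<^sub>0 where w\<^sub>0: "w\<^sub>0 \<in> C" "\<forall>t\<in>T. w\<^sub>0 $ t = c $ t" using exists_codeword_extending by blast
  then have "w\<^sub>0 \<in> subcode_along C T c" by (auto simp: subcode_along_def intro!: exI[of _ 1])
  moreover have "w\<^sub>0 \<noteq> 0" using w\<^sub>0(2) assms by auto
  ultimately have "\<not> subcode_along C T c \<subseteq> {0}" by blast
  then show ?thesis using vec.dim_eq_0 by blast
qed

end

lemma covering_dim_le:
  assumes "vec.subspace D" "D \<subseteq> C" "Supp D = UNIV" "0 < vec.dim D"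
  shows "covering_dim C \<noteq> \<infinity> \<and> the_enat (covering_dim C) \<le> vec.dim D"
proof -
  have "Supp C = UNIV" using assms(2,3) unfolding Supp_def by blast
  moreover have "(LEAST r. 0 < r \<and> (\<exists>D. vec.subspace D \<and> D \<subseteq> C \<and> vec.dim D = r \<and> Supp D = UNIV))
      \<le> vec.dim D"
    by (rule Least_le) (use assms in blast)
  ultimately show ?thesis by (simp add: covering_dim_def)
qed

theorem mainTheorem10:
  fixes C :: "(('a::{finite,field})^'n::finite) set" and k :: nat
  assumes "odd CARD('a)"
    and "vec.subspace C"
    and "vec.dim C = k"
    and "dual_code C \<noteq> {0}"
    and "min_dist (dual_code C) > 3"
  shows "covering_dim C \<noteq> \<infinity> \<and>
         int (the_enat (covering_dim C)) \<le> int k - int (min_dist (dual_code C)) + 2"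
proof -
  define d where "d = min_dist (dual_code C)"
  interpret dual_distance C d
    using assms(2) by unfold_locales (simp_all add: d_def min_dist_le_weight)
  obtain y where "y \<in> dual_code C" "y \<noteq> 0"
    using assms(4) vec.subspace_0[OF dual_code_subspace] by blast
  then have "d - 1 \<le> CARD('n)" using dual_weight_ge weight_le_card[of y UNIV] by fastforce
  then obtain T :: "'n set" where card_T: "card T = d - 1" by (metis obtain_subset_with_card_n)
  interpret dual_distance_small_set C d T by unfold_locales (use card_T assms(5) d_def in simp)
  obtain t\<^sub>1 t\<^sub>2 t\<^sub>3 where t: "t\<^sub>1 \<in> T" "t\<^sub>2 \<in> T" "t\<^sub>3 \<in> T" "t\<^sub>1 \<noteq> t\<^sub>2" "t\<^sub>1 \<noteq> t\<^sub>3" "t\<^sub>2 \<noteq> t\<^sub>3"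
  proof -
    have "3 \<le> card T" using card_T assms(5) d_def by simp
    then obtain T\<^sub>3 where "T\<^sub>3 \<subseteq> T" "card T\<^sub>3 = 3" by (rule obtain_subset_with_card_n)
    then show thesis using that by (auto simp: card_3_iff)
  qed
  have "card {0 :: 'a, 1} \<le> CARD('a)" by (rule card_mono) simp_all
  then have q: "2 < CARD('a)" using assms(1) by (cases "CARD('a) = 2") auto
  obtain c where c: "\<forall>t\<in>T. c $ t \<noteq> 0" "\<forall>y\<in>dual_words_near C T. (\<Sum>t\<in>T. c $ t * y $ t) \<noteq> 0"
    using exists_coeffs_avoiding_linear_forms[OF q t dual_words_near_nonzero
        dual_words_near_proportional[OF _ _ t(1,2,4)]] by blast
  have "covering_dim C \<noteq> \<infinity> \<and> the_enat (covering_dim C) \<le> vec.dim (subcode_along C T c)"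
    using subspace c(1) t(1)
    by (intro covering_dim_le subspace_subcode_along Supp_subcode_along[OF c] subcode_along_dim_pos)
      (auto simp: subcode_along_def)
  moreover have "vec.dim (subcode_along C T c) + card T \<le> k + 1"
    using dim_subcode_along assms(3) by simp
  ultimately show ?thesis using card_T assms(5) unfolding d_def by linarith
qed

end
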